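(* Let $M \ge 1$ be an integer, let $q_1, \ldots, q_M \in [0,1]$, and let $\tau \ge 1$. Define \[ \chi(\gamma) = q_1 + \frac{q_2}{1!}\gamma + \frac{q_3}{2!}\gamma^2 + \cdots + \frac{q_M}{(M-1)!}\gamma^{M-1} \] and, for $\gamma \ge 0$, \[ f(\gamma) = \frac{\gamma\, \chi(\gamma)\, e^{-\gamma}}{e^{-\gamma} + \tau\left(1 - e^{-\gamma}\right)}. \] If $q_1 \le 2 q_2 \le 3 q_3 \le \cdots \le M q_M$, then $f$ is unimodal on $[0,\infty)$. In particular, $f$ is unimodal whenever $M \le 2$.
   Context: A function $f:[0,\infty)\to\mathbb{R}$ is called unimodal if it has a single maximum, i.e., there exists $\gamma^* \ge 0$ such that $f$ is nondecreasing on $[0,\gamma^*]$ and nonincreasing on $[\gamma^*,\infty)$. (Here $q_L$ is interpreted as the probability that all $L$ simultaneously transmitted packets are successfully decoded, and $\tau$ is the number of time slots in a busy period, but these interpretations are not needed for the statement.) *)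

theory Defs
  imports Complex_Main
begin

definition unimodal :: "(real \<Rightarrow> real) \<Rightarrow> bool" where
  "unimodal f \<longleftrightarrow> (\<exists>g\<ge>0.
      (\<forall>x y. 0 \<le> x \<and> x \<le> y \<and> y \<le> g \<longrightarrow> f x \<le> f y) \<and>
      (\<forall>x y. g \<le> x \<and> x \<le> y \<longrightarrow> f y \<le> f x))"

definition chi :: "nat \<Rightarrow> (nat \<Rightarrow> real) \<Rightarrow> real \<Rightarrow> real" where
  "chi M q \<gamma> = (\<Sum>k=1..M. q k / fact (k - 1) * \<gamma> ^ (k - 1))"

definition fthr :: "nat \<Rightarrow> (nat \<Rightarrow> real) \<Rightarrow> real \<Rightarrow> real \<Rightarrow> real" where
  "fthr M q \<tau> \<gamma> = \<gamma> * chi M q \<gamma> * exp (-\<gamma>) / (exp (-\<gamma>) + \<tau> * (1 - exp (-\<gamma>)))"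

end

theory Submission imports Defs begin

text \<open>Write \<open>f = g e\<^sup>-\<^sup>\<gamma> / D\<close> with \<open>g \<gamma> = \<gamma> \<chi> \<gamma>\<close> and \<open>D \<gamma> = \<tau> - (\<tau> - 1) e\<^sup>-\<^sup>\<gamma>\<close>. Then
  \<open>f' = e\<^sup>-\<^sup>\<gamma> P / D\<^sup>2\<close> with \<open>P = (g' - g) D - (\<tau> - 1) g e\<^sup>-\<^sup>\<gamma>\<close>, and the exponential terms
  cancel in \<open>P' = (g'' - g') D\<close>. Under the hypothesis the polynomial \<open>g'' - g'\<close> has nonnegative
  coefficients except the leading one, so it changes sign at most once on \<open>(0,\<infinity>)\<close>, from \<open>+\<close> to
  \<open>-\<close>; for \<open>M = 2\<close> it is a decreasing linear function. Since \<open>P 0 \<ge> 0\<close>, the same then holds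
  for \<open>P\<close> and hence for \<open>f'\<close>, and \<open>f' \<le> 0\<close> for \<open>\<gamma> > M\<close> because there \<open>g' \<le> g\<close>.\<close>

definition single_crossing :: "(real \<Rightarrow> real) \<Rightarrow> bool" where
  "single_crossing g \<longleftrightarrow> (\<forall>x y. 0 < x \<longrightarrow> x \<le> y \<longrightarrow> g x < 0 \<longrightarrow> g y \<le> 0)"

lemma single_crossing_mult_pos:
  assumes "single_crossing g" and "\<And>x. x > 0 \<Longrightarrow> p x > 0"
  shows "single_crossing (\<lambda>x. g x * p x)"
  unfolding single_crossing_def
proof (intro allI impI)
  fix x y :: real assume xy: "0 < x" "x \<le> y" and neg: "g x * p x < 0"
  have "p x > 0" "p y > 0" using xy assms(2) by auto
  with neg have "g x < 0" by (simp add: mult_less_0_iff)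
  with xy assms(1) have "g y \<le> 0" unfolding single_crossing_def by blast
  with \<open>p y > 0\<close> show "g y * p y \<le> 0" by (simp add: mult_nonpos_nonneg)
qed

lemma single_crossing_if_antimono:
  assumes "\<And>x y. 0 < x \<Longrightarrow> x \<le> y \<Longrightarrow> g y \<le> g x"
  shows "single_crossing g"
  unfolding single_crossing_def using assms by (meson less_imp_le order.trans)

lemma single_crossing_poly:
  fixes w :: "nat \<Rightarrow> real"
  assumes w: "\<And>i. i < L \<Longrightarrow> w i \<ge> 0"
  shows "single_crossing (\<lambda>y. (\<Sum>i<L. w i * y^i) + W * y^L)"
  unfolding single_crossing_def
proof (intro allI impI)
  fix x y :: real
  assume xy: "0 < x" "x \<le> y" and neg: "(\<Sum>i<L. w i * x^i) + W * x^L < 0"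
  have "x^L * (\<Sum>i<L. w i * y^i) \<le> y^L * (\<Sum>i<L. w i * x^i)"
    unfolding sum_distrib_left
  proof (rule sum_mono)
    fix i assume "i \<in> {..<L}"
    hence i: "i < L" by simp
    have xL: "x^L = x^i * x^(L-i)" and yL: "y^L = y^i * y^(L-i)"
      using i by (simp_all flip: power_add)
    have "x^(L-i) \<le> y^(L-i)" using xy by (intro power_mono) auto
    hence "(w i * y^i * x^i) * x^(L-i) \<le> (w i * y^i * x^i) * y^(L-i)"
      using w[OF i] xy by (intro mult_left_mono) auto
    thus "x^L * (w i * y^i) \<le> y^L * (w i * x^i)"
      unfolding xL yL by (simp add: algebra_simps)
  qed
  hence "x^L * ((\<Sum>i<L. w i * y^i) + W * y^L) \<le> y^L * ((\<Sum>i<L. w i * x^i) + W * x^L)"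
    by (simp add: algebra_simps)
  also have "\<dots> < 0" using neg xy by (simp add: mult_pos_neg)
  finally show "(\<Sum>i<L. w i * y^i) + W * y^L \<le> 0"
    using xy by (metis linorder_not_le mult_pos_pos not_less_iff_gr_or_eq zero_less_power)
qed

lemma le_if_deriv_nonneg:
  fixes F F' :: "real \<Rightarrow> real"
  assumes "a \<le> b" "continuous_on {a..b} F"
    and "\<And>z. a < z \<Longrightarrow> z < b \<Longrightarrow> (F has_real_derivative F' z) (at z) \<and> F' z \<ge> 0"
  shows "F a \<le> F b"
  using DERIV_nonneg_imp_increasing_open[of a b F] assms by blast

lemma ge_if_deriv_nonpos:
  fixes F F' :: "real \<Rightarrow> real"
  assumes "a \<le> b" "continuous_on {a..b} F"
    and "\<And>z. a < z \<Longrightarrow> z < b \<Longrightarrow> (F has_real_derivative F' z) (at z) \<and> F' z \<le> 0"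
  shows "F b \<le> F a"
  using DERIV_nonpos_imp_decreasing_open[of a b F] assms by blast

lemma single_crossing_if_deriv_single_crossing:
  fixes F F' :: "real \<Rightarrow> real"
  assumes cont: "continuous_on {0..} F"
    and der: "\<And>x. x > 0 \<Longrightarrow> (F has_real_derivative F' x) (at x)"
    and F': "single_crossing F'"
    and F0: "F 0 \<ge> 0"
  shows "single_crossing F"
  unfolding single_crossing_def
proof (intro allI impI)
  fix x y assume x: "0 < x" "x \<le> y" "F x < 0"
  have cont_sub: "\<And>a b. 0 \<le> a \<Longrightarrow> continuous_on {a..b} F"
    using cont by (rule continuous_on_subset) auto
  show "F y \<le> 0"
  proof (cases "\<exists>z. 0 < z \<and> z < x \<and> F' z < 0")
    case True
    then obtain z where z: "0 < z" "z < x" "F' z < 0" by blast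
    have "F y \<le> F x"
      by (rule ge_if_deriv_nonpos[of x y F F'])
        (use x z der F' cont_sub in \<open>auto simp: single_crossing_def\<close>)
    with x show ?thesis by auto
  next
    case False
    then have "F' z \<ge> 0" if "0 < z" "z < x" for z
      using that by force
    then have "F 0 \<le> F x"
      by (intro le_if_deriv_nonneg[of 0 x F F']) (use x der cont_sub in auto)
    with x F0 show ?thesis by auto
  qed
qed

text \<open>The mode is the infimum of the points where the derivative is negative.\<close>

lemma unimodal_if_deriv_single_crossing:
  fixes F F' :: "real \<Rightarrow> real"
  assumes cont: "continuous_on {0..} F"
    and der: "\<And>x. x > 0 \<Longrightarrow> (F has_real_derivative F' x) (at x)"
    and F': "single_crossing F'"
    and eventually_nonpos: "x0 \<ge> 0" "\<And>y. y > x0 \<Longrightarrow> F' y \<le> 0"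
  shows "unimodal F"
proof -
  have cont_sub: "\<And>a b. 0 \<le> a \<Longrightarrow> continuous_on {a..b} F"
    using cont by (rule continuous_on_subset) auto
  define S where "S = {x. x > 0 \<and> F' x < 0}"
  show ?thesis
  proof (cases "S = {}")
    case True
    show ?thesis unfolding unimodal_def
    proof (intro exI[of _ x0] conjI allI impI)
      fix x y assume "0 \<le> x \<and> x \<le> y \<and> y \<le> x0"
      moreover have "F' z \<ge> 0" if "0 < z" for z
        using True that by (force simp: S_def)
      ultimately show "F x \<le> F y"
        by (intro le_if_deriv_nonneg[of x y F F']) (use der cont_sub in auto)
    next
      fix x y assume "x0 \<le> x \<and> x \<le> y"
      then show "F y \<le> F x"
        by (intro ge_if_deriv_nonpos[of x y F F'])
          (use eventually_nonpos der cont_sub in \<open>auto\<close>)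
    qed (use eventually_nonpos in auto)
  next
    case False
    have bdd: "bdd_below S" unfolding S_def by (rule bdd_belowI[of _ 0]) auto
    have g0: "Inf S \<ge> 0" using False by (intro cInf_greatest) (auto simp: S_def)
    show ?thesis unfolding unimodal_def
    proof (intro exI[of _ "Inf S"] conjI allI impI g0)
      fix x y assume a: "0 \<le> x \<and> x \<le> y \<and> y \<le> Inf S"
      have "F' z \<ge> 0" if "x < z" "z < y" for z
      proof -
        have "z \<notin> S" using a that cInf_lower[OF _ bdd, of z] by force
        thus ?thesis using that a by (auto simp: S_def)
      qed
      thus "F x \<le> F y"
        by (intro le_if_deriv_nonneg[of x y F F']) (use a der cont_sub in auto)
    next
      fix x y assume a: "Inf S \<le> x \<and> x \<le> y"
      have "F' z \<le> 0" if z: "x < z" "z < y" for z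
      proof -
        have "Inf S < z" using a z by linarith
        then obtain s where "s \<in> S" "s < z" using cInf_less_iff[OF False bdd] by blast
        thus ?thesis using F' by (auto simp: S_def single_crossing_def)
      qed
      thus "F y \<le> F x"
        by (intro ge_if_deriv_nonpos[of x y F F']) (use a g0 der cont_sub in auto)
    qed
  qed
qed

definition coef :: "(nat \<Rightarrow> real) \<Rightarrow> nat \<Rightarrow> real" where
  "coef q j = q (Suc j) / fact j"

definition gpoly :: "nat \<Rightarrow> (nat \<Rightarrow> real) \<Rightarrow> real \<Rightarrow> real" where
  "gpoly M q y = (\<Sum>j<M. coef q j * y ^ Suc j)"

definition gpoly_deriv :: "nat \<Rightarrow> (nat \<Rightarrow> real) \<Rightarrow> real \<Rightarrow> real" where
  "gpoly_deriv M q y = (\<Sum>j<M. coef q j * real (Suc j) * y ^ j)"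

definition gpoly_deriv2 :: "nat \<Rightarrow> (nat \<Rightarrow> real) \<Rightarrow> real \<Rightarrow> real" where
  "gpoly_deriv2 M q y = (\<Sum>j<M. coef q j * real (Suc j) * real j * y ^ (j - 1))"

definition denom :: "real \<Rightarrow> real \<Rightarrow> real" where
  "denom \<tau> y = \<tau> - (\<tau> - 1) * exp (-y)"

definition slope_factor :: "nat \<Rightarrow> (nat \<Rightarrow> real) \<Rightarrow> real \<Rightarrow> real \<Rightarrow> real" where
  "slope_factor M q \<tau> y =
     (gpoly_deriv M q y - gpoly M q y) * denom \<tau> y - (\<tau> - 1) * gpoly M q y * exp (-y)"

lemma chi_eq_sum_coef: "chi M q y = (\<Sum>j<M. coef q j * y ^ j)"
  unfolding chi_def coef_def by (simp add: sum.atLeast1_atMost_eq)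

lemma fthr_eq: "fthr M q \<tau> = (\<lambda>y. gpoly M q y * exp (-y) / denom \<tau> y)"
  unfolding fthr_def gpoly_def denom_def chi_eq_sum_coef
  by (simp add: sum_distrib_left algebra_simps)

lemma mult_power_pred: "0 < n \<Longrightarrow> y * y^(n - Suc 0) = (y::real)^n"
  by (cases n) auto

lemma gpoly_has_derivative: "(gpoly M q has_real_derivative gpoly_deriv M q y) (at y)"
  unfolding gpoly_def gpoly_deriv_def
  by (auto intro!: derivative_eq_intros sum.cong simp: algebra_simps mult_power_pred)

lemma gpoly_deriv_has_derivative: "(gpoly_deriv M q has_real_derivative gpoly_deriv2 M q y) (at y)"
  unfolding gpoly_deriv2_def gpoly_deriv_def
  by (auto intro!: derivative_eq_intros sum.cong simp: algebra_simps mult_power_pred)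

lemma slope_factor_has_derivative:
  "(slope_factor M q \<tau> has_real_derivative
     (gpoly_deriv2 M q y - gpoly_deriv M q y) * denom \<tau> y) (at y)"
  unfolding slope_factor_def denom_def
  by (rule derivative_eq_intros gpoly_has_derivative gpoly_deriv_has_derivative refl | simp)+
    (simp add: algebra_simps)

lemma fthr_has_derivative:
  assumes "denom \<tau> y \<noteq> 0"
  shows "(fthr M q \<tau> has_real_derivative
           slope_factor M q \<tau> y * (exp (-y) / (denom \<tau> y)\<^sup>2)) (at y)"
proof -
  have "denom \<tau> y \<noteq> 0 \<Longrightarrow>
      ((\<lambda>y. gpoly M q y * exp (-y) / denom \<tau> y) has_real_derivative
        exp (-y) * slope_factor M q \<tau> y / (denom \<tau> y)\<^sup>2) (at y)"
    unfolding slope_factor_def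
    apply (rule derivative_eq_intros gpoly_has_derivative refl | simp)+
    unfolding denom_def
    apply (rule derivative_eq_intros refl | simp)+
    apply (simp add: field_simps power2_eq_square)
    done
  then show ?thesis using assms unfolding fthr_eq by (simp add: mult.commute)
qed

lemma denom_ge_1:
  assumes "\<tau> \<ge> 1" "y \<ge> 0"
  shows "denom \<tau> y \<ge> 1"
proof -
  from assms have "(\<tau> - 1) * exp (-y) \<le> \<tau> - 1" by (intro mult_left_le) auto
  then show ?thesis unfolding denom_def by simp
qed

lemma coef_nonneg: "\<forall>k\<in>{1..M}. 0 \<le> q k \<Longrightarrow> j < M \<Longrightarrow> coef q j \<ge> 0"
  unfolding coef_def by auto

lemma slope_factor_nonpos_beyond:
  assumes q: "\<forall>k\<in>{1..M}. 0 \<le> q k" and \<tau>: "\<tau> \<ge> 1" and y: "y > real M"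
  shows "slope_factor M q \<tau> y \<le> 0"
proof -
  have "gpoly_deriv M q y \<le> gpoly M q y" unfolding gpoly_deriv_def gpoly_def
  proof (rule sum_mono)
    fix j assume "j \<in> {..<M}"
    hence "real (Suc j) * y^j \<le> y * y^j" "coef q j \<ge> 0"
      using y coef_nonneg[OF q] by (auto intro!: mult_right_mono)
    thus "coef q j * real (Suc j) * y ^ j \<le> coef q j * y ^ Suc j"
      by (simp add: mult.assoc mult_left_mono)
  qed
  moreover have "gpoly M q y \<ge> 0"
    using y coef_nonneg[OF q] by (auto simp: gpoly_def intro!: sum_nonneg)
  moreover have "denom \<tau> y \<ge> 0" using denom_ge_1[OF \<tau>, of y] y by simp
  ultimately have "(gpoly_deriv M q y - gpoly M q y) * denom \<tau> y \<le> 0"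
    "(\<tau> - 1) * gpoly M q y * exp (-y) \<ge> 0"
    using \<tau> by (auto intro: mult_nonpos_nonneg)
  then show ?thesis unfolding slope_factor_def by linarith
qed

lemma fthr_unimodal_if_single_crossing:
  assumes q: "\<forall>k\<in>{1..M}. 0 \<le> q k" and \<tau>: "\<tau> \<ge> 1"
    and sc: "single_crossing (\<lambda>y. gpoly_deriv2 M q y - gpoly_deriv M q y)"
  shows "unimodal (fthr M q \<tau>)"
proof -
  have denom_pos: "\<And>y. y \<ge> 0 \<Longrightarrow> denom \<tau> y > 0" using denom_ge_1 \<tau> by force
  have slope_factor_sc: "single_crossing (slope_factor M q \<tau>)"
  proof (rule single_crossing_if_deriv_single_crossing)
    show "continuous_on {0..} (slope_factor M q \<tau>)"
      by (intro continuous_at_imp_continuous_on ballI DERIV_isCont[OF slope_factor_has_derivative])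
    show "single_crossing (\<lambda>y. (gpoly_deriv2 M q y - gpoly_deriv M q y) * denom \<tau> y)"
      using sc denom_pos by (intro single_crossing_mult_pos) auto
    show "slope_factor M q \<tau> 0 \<ge> 0"
      using coef_nonneg[OF q]
      by (simp add: slope_factor_def gpoly_def gpoly_deriv_def denom_def sum_nonneg)
  qed (rule slope_factor_has_derivative)
  have der: "\<And>y. y \<ge> 0 \<Longrightarrow> (fthr M q \<tau> has_real_derivative
      slope_factor M q \<tau> y * (exp (-y) / (denom \<tau> y)\<^sup>2)) (at y)"
    using denom_pos by (intro fthr_has_derivative) force
  show ?thesis
  proof (rule unimodal_if_deriv_single_crossing)
    show "continuous_on {0..} (fthr M q \<tau>)"
      by (intro continuous_at_imp_continuous_on ballI DERIV_isCont[OF der]) auto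
    show "single_crossing (\<lambda>y. slope_factor M q \<tau> y * (exp (-y) / (denom \<tau> y)\<^sup>2))"
      using slope_factor_sc denom_pos
      by (intro single_crossing_mult_pos) (auto intro!: divide_pos_pos zero_less_power)
    show "slope_factor M q \<tau> y * (exp (-y) / (denom \<tau> y)\<^sup>2) \<le> 0" if "real M < y" for y
      using slope_factor_nonpos_beyond[OF q \<tau> that] by (intro mult_nonpos_nonneg) auto
  qed (use der in auto)
qed

lemma gpoly_deriv2_minus_deriv:
  "gpoly_deriv2 (Suc L) q y - gpoly_deriv (Suc L) q y =
    (\<Sum>i<L. (real (Suc (Suc i)) * q (Suc (Suc i)) - real (Suc i) * q (Suc i)) / fact i * y^i)
      + (- q (Suc L) / fact L * real (Suc L)) * y^L"
proof -
  have "gpoly_deriv2 (Suc L) q y =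
      (\<Sum>i<L. q (Suc (Suc i)) * real (Suc (Suc i)) / fact i * y^i)"
    unfolding gpoly_deriv2_def coef_def
    by (subst sum.lessThan_Suc_shift) (simp add: fact_Suc field_simps del: of_nat_Suc)
  moreover have "gpoly_deriv (Suc L) q y =
      (\<Sum>i<L. q (Suc i) * real (Suc i) / fact i * y^i) + q (Suc L) / fact L * real (Suc L) * y^L"
    unfolding gpoly_deriv_def coef_def by simp
  ultimately show ?thesis
    by (simp add: sum_subtractf[symmetric] diff_divide_distrib algebra_simps)
qed

lemma single_crossing_gpoly_if_weighted_mono:
  assumes "\<forall>k\<in>{1..<M}. real k * q k \<le> real (k + 1) * q (k + 1)"
  shows "single_crossing (\<lambda>y. gpoly_deriv2 M q y - gpoly_deriv M q y)"
proof (cases M)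
  case 0
  then show ?thesis by (simp add: single_crossing_def gpoly_deriv_def gpoly_deriv2_def)
next
  case (Suc L)
  have "(real (Suc (Suc i)) * q (Suc (Suc i)) - real (Suc i) * q (Suc i)) / fact i \<ge> 0"
    if "i < L" for i
  proof -
    have "Suc i \<in> {1..<M}" using that Suc by auto
    then have "real (Suc i) * q (Suc i) \<le> real (Suc i + 1) * q (Suc i + 1)" using assms by blast
    then show ?thesis by simp
  qed
  then show ?thesis
    unfolding Suc gpoly_deriv2_minus_deriv by (rule single_crossing_poly)
qed

lemma single_crossing_gpoly_2:
  assumes "q 2 \<ge> 0"
  shows "single_crossing (\<lambda>y. gpoly_deriv2 2 q y - gpoly_deriv 2 q y)"
proof (rule single_crossing_if_antimono)
  fix x y :: real assume "0 < x" "x \<le> y"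
  with assms have "q 2 * x \<le> q 2 * y" by (simp add: mult_left_mono)
  then show "gpoly_deriv2 2 q y - gpoly_deriv 2 q y \<le> gpoly_deriv2 2 q x - gpoly_deriv 2 q x"
    using gpoly_deriv2_minus_deriv[of 1 q x] gpoly_deriv2_minus_deriv[of 1 q y]
    by (simp add: numeral_2_eq_2 mult.commute)
qed

theorem lemma1:
  fixes M :: nat and q :: "nat \<Rightarrow> real" and \<tau> :: real
  assumes "M \<ge> 1"
    and "\<forall>k\<in>{1..M}. 0 \<le> q k \<and> q k \<le> 1"
    and "\<tau> \<ge> 1"
  shows "((\<forall>k\<in>{1..<M}. real k * q k \<le> real (k + 1) * q (k + 1)) \<longrightarrow> unimodal (fthr M q \<tau>))
         \<and> (M \<le> 2 \<longrightarrow> unimodal (fthr M q \<tau>))"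
proof -
  have q: "\<forall>k\<in>{1..M}. 0 \<le> q k" using assms(2) by auto
  note unimodal_if = fthr_unimodal_if_single_crossing[OF q assms(3)]
  have mono_case: "unimodal (fthr M q \<tau>)"
    if "\<forall>k\<in>{1..<M}. real k * q k \<le> real (k + 1) * q (k + 1)"
    using unimodal_if[OF single_crossing_gpoly_if_weighted_mono[OF that]] .
  have "unimodal (fthr M q \<tau>)" if "M \<le> 2"
  proof (cases "M = 1")
    case True
    then show ?thesis using mono_case by simp
  next
    case False
    with that assms(1) have "M = 2" by auto
    moreover from this have "q 2 \<ge> 0" using q by auto
    ultimately show ?thesis using unimodal_if single_crossing_gpoly_2 by blast
  qed
  with mono_case show ?thesis by blast
qed

end
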